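(* There are $\mathfrak{c}$ many infinite subsets of $\omega$ which are pairwise almost oscillating.
   Context: Two sets $A, B \subseteq \omega$ are oscillating if for every two-element set $\{x, y\} \subseteq A$ and every two-element set $\{w, z\} \subseteq B$ we have $|y - x| \neq |z - w|$. They are almost oscillating if there is $n \in \omega$ such that $A \setminus n$ and $B \setminus n$ are oscillating (here $n = \{0, \dots, n-1\}$). $\mathfrak{c}$ denotes the cardinality of the continuum. *)

theory Defs
  imports Complex_Main "HOL-Library.Equipollence"
begin

definition oscillating :: "nat set \<Rightarrow> nat set \<Rightarrow> bool" where
  "oscillating A B \<longleftrightarrow>
     (\<forall>x\<in>A. \<forall>y\<in>A. \<forall>w\<in>B. \<forall>z\<in>B.
        x \<noteq> y \<longrightarrow> w \<noteq> z \<longrightarrow> \<bar>int y - int x\<bar> \<noteq> \<bar>int z - int w\<bar>)"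

definition almost_oscillating :: "nat set \<Rightarrow> nat set \<Rightarrow> bool" where
  "almost_oscillating A B \<longleftrightarrow> (\<exists>n. oscillating (A - {..<n}) (B - {..<n}))"

end

theory Submission
  imports Defs "HOL-Analysis.Analysis" "HOL-Library.Nat_Bijection"
begin

text \<open>Distances between powers of two are of the form \<open>2\<^sup>a (2\<^sup>k - 1)\<close> with odd second
  factor, so a distance determines the smaller of the two exponents. Hence two sets of powers of
  two whose exponent sets are almost disjoint are almost oscillating. It remains to find
  continuum many almost disjoint infinite sets of exponents: code the initial segments of each
  \<open>S \<subseteq> \<omega>\<close> by natural numbers; distinct \<open>S\<close> share only finitely many initial segments.\<close>

lemma power2_mult_odd_eq_imp_eq:
  fixes x y :: int
  assumes "odd x" "odd y" "2 ^ a * x = 2 ^ b * y"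
  shows "a = b"
proof (rule ccontr)
  have less: False if "odd x" "2 ^ a * x = 2 ^ b * y" "a < b" for a b :: nat and x y :: int
  proof -
    have "(2::int) ^ a * x = 2 ^ a * (2 ^ (b - a) * y)"
      using that by (simp flip: power_add mult.assoc)
    hence "x = 2 ^ (b - a) * y" by simp
    with \<open>odd x\<close> \<open>a < b\<close> show False by simp
  qed
  assume "a \<noteq> b"
  then show False
    using less[of x a b y] less[of y b a x] assms by (metis linorder_neqE_nat)
qed

lemma abs_diff_power2:
  "\<bar>(2::int) ^ b - 2 ^ a\<bar> = 2 ^ min a b * (2 ^ (max a b - min a b) - 1)"
proof -
  have "(2::int) ^ max a b = 2 ^ min a b * 2 ^ (max a b - min a b)"
    by (simp flip: power_add)
  then show ?thesis
    by (cases "a \<le> b") (simp_all add: max_def min_def algebra_simps)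
qed

lemma abs_diff_power2_eq_imp_min_eq:
  assumes "a \<noteq> b" "c \<noteq> d"
    and "\<bar>(2::int) ^ b - 2 ^ a\<bar> = \<bar>2 ^ d - 2 ^ c\<bar>"
  shows "min a b = min c d"
proof (rule power2_mult_odd_eq_imp_eq)
  show "odd ((2::int) ^ (max a b - min a b) - 1)" "odd ((2::int) ^ (max c d - min c d) - 1)"
    using assms(1,2) by (simp_all add: max_def min_def)
qed (use assms(3) in \<open>simp add: abs_diff_power2\<close>)

lemma oscillating_powers_of_two:
  assumes "A \<subseteq> (\<lambda>k. 2 ^ k) ` K" "B \<subseteq> (\<lambda>k. 2 ^ k) ` L" "K \<inter> L = {}"
  shows "oscillating A B"
  unfolding oscillating_def
proof (intro ballI impI)
  fix x y w z assume "x \<in> A" "y \<in> A" "w \<in> B" "z \<in> B" "x \<noteq> y" "w \<noteq> z"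
  then obtain a b c d where
    exps: "a \<in> K" "b \<in> K" "c \<in> L" "d \<in> L" "x = 2 ^ a" "y = 2 ^ b" "w = 2 ^ c" "z = 2 ^ d"
    using assms(1,2) by (meson imageE subsetD)
  show "\<bar>int y - int x\<bar> \<noteq> \<bar>int z - int w\<bar>"
  proof
    assume "\<bar>int y - int x\<bar> = \<bar>int z - int w\<bar>"
    then have "\<bar>(2::int) ^ b - 2 ^ a\<bar> = \<bar>2 ^ d - 2 ^ c\<bar>"
      by (simp add: exps)
    moreover have "a \<noteq> b" "c \<noteq> d"
      using exps \<open>x \<noteq> y\<close> \<open>w \<noteq> z\<close> by auto
    ultimately have "min a b = min c d"
      by (rule abs_diff_power2_eq_imp_min_eq[rotated 2])
    moreover have "min a b \<in> K" "min c d \<in> L"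
      using exps by (simp_all add: min_def)
    ultimately show False using assms(3) by auto
  qed
qed

lemma almost_oscillating_powers_of_two:
  assumes "finite (K \<inter> L)"
  shows "almost_oscillating ((\<lambda>k. 2 ^ k) ` K) ((\<lambda>k. 2 ^ k) ` L)"
proof -
  obtain N where N: "K \<inter> L \<subseteq> {..<N}"
    using finite_nat_bounded[OF assms] by blast
  have tail: "(\<lambda>k. 2 ^ k) ` M - {..<2 ^ N} \<subseteq> (\<lambda>k. (2::nat) ^ k) ` (M - {..<N})"
    for M :: "nat set"
    by auto
  have "(K - {..<N}) \<inter> (L - {..<N}) = {}"
    using N by blast
  then have "oscillating ((\<lambda>k. 2 ^ k) ` K - {..<2 ^ N}) ((\<lambda>k. 2 ^ k) ` L - {..<2 ^ N})"
    by (rule oscillating_powers_of_two[OF tail tail])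
  then show ?thesis
    unfolding almost_oscillating_def by blast
qed

definition initial_segment_code :: "nat set \<Rightarrow> nat \<Rightarrow> nat" where
  "initial_segment_code S n = prod_encode (n, set_encode (S \<inter> {..<n}))"

lemma initial_segment_code_eq_iff:
  "initial_segment_code S n = initial_segment_code T m \<longleftrightarrow>
     n = m \<and> S \<inter> {..<n} = T \<inter> {..<n}"
  unfolding initial_segment_code_def by (auto simp: set_encode_eq)

lemma inj_initial_segment_code: "inj (initial_segment_code S)"
  by (rule injI) (simp add: initial_segment_code_eq_iff)

lemma inj_range_initial_segment_code: "inj (\<lambda>S. range (initial_segment_code S))"
proof (rule injI)
  fix S T assume eq: "range (initial_segment_code S) = range (initial_segment_code T)"
  have "S \<inter> {..<n} = T \<inter> {..<n}" for n
  proof -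
    obtain m where "initial_segment_code S n = initial_segment_code T m"
      using eq by (metis rangeE rangeI)
    then show ?thesis by (auto simp: initial_segment_code_eq_iff)
  qed
  then show "S = T"
    by (metis Int_iff lessI lessThan_iff subsetI subset_antisym)
qed

lemma finite_range_initial_segment_code_Int:
  assumes "S \<noteq> T"
  shows "finite (range (initial_segment_code S) \<inter> range (initial_segment_code T))"
proof -
  obtain m where m: "m \<in> S \<longleftrightarrow> m \<notin> T" using assms by blast
  have "range (initial_segment_code S) \<inter> range (initial_segment_code T)
          \<subseteq> initial_segment_code S ` {..m}"
  proof clarify
    fix n n' assume "initial_segment_code S n = initial_segment_code T n'"
    then have "S \<inter> {..<n} = T \<inter> {..<n}" by (auto simp: initial_segment_code_eq_iff)
    with m have "n \<le> m" by (metis Int_iff lessThan_iff not_le)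
    then show "initial_segment_code S n \<in> initial_segment_code S ` {..m}" by simp
  qed
  then show ?thesis by (rule finite_subset) simp
qed

definition coded_powers :: "nat set \<Rightarrow> nat set" where
  "coded_powers S = (\<lambda>k. 2 ^ k) ` range (initial_segment_code S)"

lemma inj_coded_powers: "inj coded_powers"
  unfolding coded_powers_def
proof (rule injI)
  fix S T
  assume "(\<lambda>k. (2::nat) ^ k) ` range (initial_segment_code S) =
          (\<lambda>k. 2 ^ k) ` range (initial_segment_code T)"
  then have "range (initial_segment_code S) = range (initial_segment_code T)"
    by (simp add: inj_image_eq_iff inj_on_def)
  then show "S = T"
    using inj_range_initial_segment_code by (auto dest: injD)
qed

lemma infinite_coded_powers: "infinite (coded_powers S)"
proof -
  have "inj (\<lambda>n. (2::nat) ^ initial_segment_code S n)"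
    using inj_initial_segment_code by (auto simp: inj_def)
  then show ?thesis
    unfolding coded_powers_def image_image by (simp add: finite_image_iff)
qed

theorem proposition10:
  shows "\<exists>F :: nat set set. F \<approx> (UNIV :: real set) \<and> (\<forall>A\<in>F. infinite A) \<and>
           pairwise almost_oscillating F"
proof (intro exI conjI)
  show "range coded_powers \<approx> (UNIV :: real set)"
    using inj_on_image_eqpoll_self[OF inj_coded_powers] nat_sets_eqpoll_reals eqpoll_trans
    by blast
  show "\<forall>A\<in>range coded_powers. infinite A"
    using infinite_coded_powers by blast
  show "pairwise almost_oscillating (range coded_powers)"
  proof (rule pairwise_imageI)
    fix S T :: "nat set" assume "S \<noteq> T"
    then show "almost_oscillating (coded_powers S) (coded_powers T)"
      unfolding coded_powers_def
      by (intro almost_oscillating_powers_of_two finite_range_initial_segment_code_Int)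
  qed
qed

end
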